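(* Let $k\le n$ be positive integers. The set $\mathcal C_{n,k}$ (the neglex standard monomial basis of $S_{n,k}$) consists exactly of the monomials $x_1^{a_1}\cdots x_n^{a_n}$ whose exponent sequence $(a_1,\dots,a_n)$ is componentwise $\le$ some $(n,k)$-staircase.
   Context: $S_{n,k}=\mathbb F[x_1,\dots,x_n]/J_{n,k}$, where $J_{n,k}$ is generated by $h_k(x_1),h_k(x_1,x_2),\dots,h_k(x_1,\dots,x_n)$ (complete homogeneous symmetric polynomials) and $e_n,e_{n-1},\dots,e_{n-k+1}$ (elementary symmetric polynomials in $x_1,\dots,x_n$). For $S=\{s_1<\cdots<s_m\}\subseteq[n]$, $\mathbf x(S)^*=x_{n-s_1+1}^{s_1}x_{n-s_2+1}^{s_2-1}\cdots x_{n-s_m+1}^{s_m-m+1}$. $\mathcal C_{n,k}$ is the set of monomials $m$ with $x_i^k\nmid m$ for all $i$ and $\mathbf x(S)^*\nmid m$ for all $S\subseteq[n]$ with $|S|=n-k+1$. A shuffle of sequences $(a_1,\dots,a_r)$ and $(b_1,\dots,b_s)$ is an interleaving preserving the relative order of the $a$'s and of the $b$'s. An $(n,k)$-staircase is a shuffle of $(k-1,k-2,\dots,1,0)$ with the sequence $(k-1,\dots,k-1)$ consisting of $n-k$ copies of $k-1$. *)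

theory Defs
  imports Main
begin

text \<open>A monomial x_1^a_1 ... x_n^a_n is represented by its exponent list [a_1,...,a_n]
  (list index i corresponds to the variable x_(i+1)).\<close>

definition mon_dvd :: "nat list \<Rightarrow> nat list \<Rightarrow> bool" where
  "mon_dvd u m \<longleftrightarrow> list_all2 (\<le>) u m"

text \<open>x(S)^*: for S = {s_1 < ... < s_m}, the variable x_(n - s_j + 1) gets exponent
  s_j - j + 1.  Position i (variable x_(i+1)) corresponds to s = n - i; the 1-based rank
  j of s in S is card {t in S. t < s} + 1, so the exponent is s - card {t in S. t < s}.\<close>

definition xS_star :: "nat \<Rightarrow> nat set \<Rightarrow> nat list" where
  "xS_star n S = map (\<lambda>i. let s = n - i in
      if s \<in> S then s - card {t \<in> S. t < s} else 0) [0..<n]"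

definition C_set :: "nat \<Rightarrow> nat \<Rightarrow> nat list set" where
  "C_set n k = {m. length m = n \<and> (\<forall>i < n. m ! i < k) \<and>
      (\<forall>S. S \<subseteq> {1..n} \<and> card S = n - k + 1 \<longrightarrow> \<not> mon_dvd (xS_star n S) m)}"

definition staircases :: "nat \<Rightarrow> nat \<Rightarrow> nat list set" where
  "staircases n k = shuffles (rev [0..<k]) (replicate (n - k) (k - 1))"

end

theory Submission
  imports Defs
begin

text \<open>Both sides are described by a recursion on the first exponent a_1. Reading a shuffle of
  (k-1,...,0) with copies of k-1 from the left, its head is either the next step of the descending
  staircase or a copy of k-1; for x(S)^*, the variable x_1 occurs exactly when n \<in> S. The two
  recursions are dual: a fits under a shuffle with c remaining descending steps iff no x(S)^* with
  |S| = length a + 1 - c divides it, which for c = k is the defining condition of C_{n,k}.\<close>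

fun stair_fits :: "nat \<Rightarrow> nat list \<Rightarrow> nat \<Rightarrow> bool" where
  "stair_fits v [] c \<longleftrightarrow> c = 0"
| "stair_fits v (x # a) c \<longleftrightarrow>
     (0 < c \<and> x < c \<and> stair_fits v a (c - 1)) \<or> (c \<le> length a \<and> x \<le> v \<and> stair_fits v a c)"

lemma stair_fits_length: "stair_fits v a c \<Longrightarrow> c \<le> length a"
  by (induction a arbitrary: c) fastforce+

lemma stair_fits_0_iff: "stair_fits v a 0 \<longleftrightarrow> (\<forall>x\<in>set a. x \<le> v)"
  by (induction a) auto

lemma stair_fits_pred:
  "stair_fits v a c \<Longrightarrow> \<forall>x\<in>set a. x \<le> v \<Longrightarrow> stair_fits v a (c - 1)"
proof (induction a arbitrary: c)
  case (Cons x a c)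
  show ?case
  proof (cases "0 < c \<and> x < c \<and> stair_fits v a (c - 1)")
    case True
    then show ?thesis using stair_fits_length[of v a "c - 1"] Cons.prems by (cases c) auto
  next
    case False
    then show ?thesis using Cons by auto
  qed
qed simp

lemma stair_fits_bounded: "stair_fits v a c \<Longrightarrow> c \<le> Suc v \<Longrightarrow> \<forall>x\<in>set a. x \<le> v"
  by (induction a arbitrary: c) fastforce+

lemma Cons_in_staircase_shuffles:
  assumes "c \<le> Suc l"
  shows "z # zs \<in> shuffles (rev [0..<c]) (replicate (Suc l - c) v) \<longleftrightarrow>
    (0 < c \<and> z = c - 1 \<and> zs \<in> shuffles (rev [0..<c - 1]) (replicate (Suc l - c) v))
    \<or> (c \<le> l \<and> z = v \<and> zs \<in> shuffles (rev [0..<c]) (replicate (l - c) v))"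
proof (cases c)
  case 0
  then show ?thesis by (cases l) (auto simp: Cons_in_shuffles_iff)
next
  case (Suc d)
  have "replicate (Suc l - c) v \<noteq> [] \<longleftrightarrow> c \<le> l"
    and "c \<le> l \<Longrightarrow> replicate (Suc l - c) v = v # replicate (l - c) v"
    using Suc by (auto simp: Suc_diff_Suc[symmetric])
  with Suc assms show ?thesis
    by (auto simp: Cons_in_shuffles_iff)
qed

lemma staircase_dominated_iff_stair_fits:
  "c \<le> length a \<Longrightarrow>
   (\<exists>s \<in> shuffles (rev [0..<c]) (replicate (length a - c) v). list_all2 (\<le>) a s) \<longleftrightarrow>
   stair_fits v a c"
proof (induction a arbitrary: c)
  case (Cons x a c)
  have "(\<exists>s \<in> shuffles (rev [0..<c]) (replicate (length (x # a) - c) v). list_all2 (\<le>) (x # a) s)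
     \<longleftrightarrow> (\<exists>z zs. z # zs \<in> shuffles (rev [0..<c]) (replicate (Suc (length a) - c) v) \<and>
                  x \<le> z \<and> list_all2 (\<le>) a zs)"
    by (auto simp: list_all2_Cons1)
  also have "\<dots> \<longleftrightarrow> stair_fits v (x # a) c"
  proof -
    have "0 < c \<Longrightarrow> (\<exists>s \<in> shuffles (rev [0..<c - 1]) (replicate (Suc (length a) - c) v).
        list_all2 (\<le>) a s) \<longleftrightarrow> stair_fits v a (c - 1)"
      using Cons.IH[of "c - 1"] Cons.prems by auto
    moreover have "c \<le> length a \<Longrightarrow> (\<exists>s \<in> shuffles (rev [0..<c]) (replicate (length a - c) v).
        list_all2 (\<le>) a s) \<longleftrightarrow> stair_fits v a c"
      using Cons.IH[of c] by auto
    ultimately show ?thesis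
      using Cons.prems by (simp add: Cons_in_staircase_shuffles) (rule iffI; fastforce)
  qed
  finally show ?case .
qed simp

definition xS_divides :: "nat list \<Rightarrow> nat set \<Rightarrow> bool" where
  "xS_divides a S \<longleftrightarrow> (\<forall>s\<in>S. s - card {t\<in>S. t < s} \<le> a ! (length a - s))"

text \<open>In the Cons case the largest possible index length a + 1 either lies outside S, or lies
  in S with rank m, where x(S)^* asks x_1 for the exponent length a + 1 - (m - 1).\<close>
fun has_xS_divisor :: "nat list \<Rightarrow> nat \<Rightarrow> bool" where
  "has_xS_divisor [] m \<longleftrightarrow> m = 0"
| "has_xS_divisor (x # a) m \<longleftrightarrow>
     (0 < m \<and> length a + 2 \<le> x + m \<and> has_xS_divisor a (m - 1)) \<or> has_xS_divisor a m"

lemma has_xS_divisor_length: "has_xS_divisor a m \<Longrightarrow> m \<le> length a"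
  by (induction a arbitrary: m) fastforce+

lemma has_xS_divisor_0: "has_xS_divisor a 0"
  by (induction a) auto

lemma xS_divides_Cons:
  assumes "S \<subseteq> {1..length a}"
  shows "xS_divides (x # a) S \<longleftrightarrow> xS_divides a S"
proof -
  have "(x # a) ! (length (x # a) - s) = a ! (length a - s)" if "s \<in> S" for s
    using assms that by (auto simp: Suc_diff_le)
  then show ?thesis unfolding xS_divides_def by simp
qed

lemma xS_divides_Cons_insert:
  assumes "S \<subseteq> {1..length a}"
  shows "xS_divides (x # a) (insert (Suc (length a)) S) \<longleftrightarrow>
    xS_divides a S \<and> Suc (length a) - card S \<le> x"
proof -
  have "{t \<in> insert (Suc (length a)) S. t < s} = {t \<in> S. t < s}" if "s \<in> S" for s
    using assms that by auto
  moreover have "{t \<in> insert (Suc (length a)) S. t < Suc (length a)} = S"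
    using assms by auto
  ultimately have "xS_divides (x # a) (insert (Suc (length a)) S) \<longleftrightarrow>
      xS_divides (x # a) S \<and> Suc (length a) - card S \<le> x"
    unfolding xS_divides_def by (simp add: conj_commute cong: ball_cong)
  with xS_divides_Cons[OF assms] show ?thesis by simp
qed

lemma has_xS_divisor_iff:
  "has_xS_divisor a m \<longleftrightarrow> (\<exists>S. S \<subseteq> {1..length a} \<and> card S = m \<and> xS_divides a S)"
proof (induction a arbitrary: m)
  case Nil
  then show ?case by (auto simp: xS_divides_def)
next
  case (Cons x a m)
  let ?l = "Suc (length a)"
  show ?case
  proof
    assume "has_xS_divisor (x # a) m"
    then consider "0 < m" "length a + 2 \<le> x + m" "has_xS_divisor a (m - 1)"
      | "has_xS_divisor a m" by auto
    then show "\<exists>S. S \<subseteq> {1..length (x # a)} \<and> card S = m \<and> xS_divides (x # a) S"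
    proof cases
      case 1
      then obtain S where S: "S \<subseteq> {1..length a}" "card S = m - 1" "xS_divides a S"
        using Cons.IH by blast
      then have "finite S" "?l \<notin> S" by (auto intro: finite_subset)
      with S 1 show ?thesis
        by (intro exI[of _ "insert ?l S"]) (auto simp: xS_divides_Cons_insert)
    next
      case 2
      then obtain S where "S \<subseteq> {1..length a}" "card S = m" "xS_divides a S"
        using Cons.IH by blast
      then show ?thesis by (intro exI[of _ S]) (auto simp: xS_divides_Cons)
    qed
  next
    assume "\<exists>S. S \<subseteq> {1..length (x # a)} \<and> card S = m \<and> xS_divides (x # a) S"
    then obtain S where S: "S \<subseteq> {1..?l}" "card S = m" "xS_divides (x # a) S" by auto
    show "has_xS_divisor (x # a) m"
    proof (cases "?l \<in> S")
      case True
      define S' where "S' = S - {?l}"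
      have S': "S' \<subseteq> {1..length a}" "finite S'" "?l \<notin> S'"
        using S(1) by (auto simp: S'_def intro: finite_subset)
      have "S = insert ?l S'" using True by (auto simp: S'_def)
      with S S' have "card S' = m - 1" "0 < m" "xS_divides a S'" "?l - card S' \<le> x"
        by (auto simp: xS_divides_Cons_insert)
      with S' Cons.IH[of "m - 1"] show ?thesis by auto
    next
      case False
      with S(1) have "S \<subseteq> {1..length a}" by (auto simp: subset_iff le_Suc_eq)
      with S Cons.IH[of m] show ?thesis by (auto simp: xS_divides_Cons)
    qed
  qed
qed

lemma mon_dvd_xS_star_iff:
  assumes "length a = n" "S \<subseteq> {1..n}"
  shows "mon_dvd (xS_star n S) a \<longleftrightarrow> xS_divides a S"
proof -
  have "mon_dvd (xS_star n S) a \<longleftrightarrow>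
      (\<forall>i<n. n - i \<in> S \<longrightarrow> (n - i) - card {t\<in>S. t < n - i} \<le> a ! i)"
    unfolding mon_dvd_def xS_star_def using assms(1) by (auto simp: list_all2_conv_all_nth Let_def)
  also have "\<dots> \<longleftrightarrow> (\<forall>s\<in>S. s - card {t\<in>S. t < s} \<le> a ! (n - s))"
  proof
    assume H: "\<forall>i<n. n - i \<in> S \<longrightarrow> (n - i) - card {t\<in>S. t < n - i} \<le> a ! i"
    show "\<forall>s\<in>S. s - card {t\<in>S. t < s} \<le> a ! (n - s)"
    proof
      fix s assume "s \<in> S"
      with assms(2) have "n - s < n" "n - (n - s) = s" by auto
      with H \<open>s \<in> S\<close> show "s - card {t\<in>S. t < s} \<le> a ! (n - s)" by force
    qed
  qed (metis diff_diff_cancel less_imp_le)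
  finally show ?thesis using assms(1) by (simp add: xS_divides_def)
qed

lemma stair_fits_iff_not_has_xS_divisor:
  "c \<le> Suc (length a) \<Longrightarrow> \<forall>x\<in>set a. x \<le> v \<Longrightarrow>
   stair_fits v a c \<longleftrightarrow> \<not> has_xS_divisor a (Suc (length a) - c)"
proof (induction a arbitrary: c)
  case Nil
  then show ?case by (cases c) auto
next
  case (Cons x a c)
  let ?l = "Suc (length a)"
  show ?case
  proof (cases c)
    case 0
    with Cons.prems has_xS_divisor_length[of "x # a" "Suc ?l"] show ?thesis
      by (auto simp: stair_fits_0_iff)
  next
    case (Suc d)
    have av: "\<forall>y\<in>set a. y \<le> v" using Cons.prems by auto
    have IH_d: "stair_fits v a d \<longleftrightarrow> \<not> has_xS_divisor a (?l - d)"
      using Cons.IH[of d] Cons.prems Suc by auto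
    have IH_c: "stair_fits v a c \<longleftrightarrow> \<not> has_xS_divisor a (?l - c)"
    proof (cases "c \<le> ?l")
      case True
      with Cons.IH[of c] av show ?thesis by auto
    next
      case False
      with stair_fits_length[of v a c] show ?thesis by (auto simp: has_xS_divisor_0)
    qed
    have "has_xS_divisor (x # a) (Suc ?l - c) \<longleftrightarrow>
        (c \<le> x \<and> has_xS_divisor a (?l - c)) \<or> has_xS_divisor a (?l - d)"
    proof (cases "c = Suc ?l")
      case True
      with Suc show ?thesis by (simp add: has_xS_divisor_0)
    next
      case False
      with Cons.prems Suc show ?thesis by (auto simp: Suc_diff_le)
    qed
    moreover have "stair_fits v (x # a) c \<longleftrightarrow> (x < c \<and> stair_fits v a d) \<or> stair_fits v a c"
      using Suc Cons.prems stair_fits_length[of v a c] by auto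
    moreover have "stair_fits v a c \<Longrightarrow> stair_fits v a d"
      using stair_fits_pred[of v a c] Suc av by simp
    ultimately show ?thesis using IH_c IH_d by auto
  qed
qed

lemma C_set_iff:
  assumes "length a = n"
  shows "a \<in> C_set n k \<longleftrightarrow> (\<forall>x\<in>set a. x < k) \<and> \<not> has_xS_divisor a (n - k + 1)"
  using assms
  by (auto simp: C_set_def mon_dvd_xS_star_iff has_xS_divisor_iff all_set_conv_all_nth)

lemma staircases_dominated_iff:
  assumes "length a = n" "0 < k" "k \<le> n"
  shows "(\<exists>s \<in> staircases n k. list_all2 (\<le>) a s) \<longleftrightarrow> stair_fits (k - 1) a k"
  using staircase_dominated_iff_stair_fits[of k a "k - 1"] assms
  by (simp add: staircases_def)

theorem mainTheorem5:
  fixes n k :: nat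
  assumes "0 < k" and "k \<le> n"
  shows "C_set n k = {a. length a = n \<and> (\<exists>s \<in> staircases n k. list_all2 (\<le>) a s)}"
proof (intro set_eqI)
  fix a
  show "a \<in> C_set n k \<longleftrightarrow> a \<in> {a. length a = n \<and> (\<exists>s \<in> staircases n k. list_all2 (\<le>) a s)}"
  proof (cases "length a = n")
    case True
    have "(\<forall>x\<in>set a. x < k) \<longleftrightarrow> (\<forall>x\<in>set a. x \<le> k - 1)"
      using assms(1) by auto
    moreover have "stair_fits (k - 1) a k \<Longrightarrow> \<forall>x\<in>set a. x \<le> k - 1"
      using stair_fits_bounded assms(1) by simp
    moreover have "n - k + 1 = Suc (length a) - k"
      using True assms(2) by simp
    ultimately show ?thesis
      using C_set_iff[OF True] staircases_dominated_iff[OF True assms]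
        stair_fits_iff_not_has_xS_divisor[of k a "k - 1"] True assms
      by auto
  next
    case False
    then show ?thesis by (simp add: C_set_def)
  qed
qed

end
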